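(* Let $q\in(1,+\infty)$, $T>0$, $x<0$ and $v>0$ be such that $\frac{2q-1}{q-1}\frac{|x|}{v}<T$. For $\theta\in(0,T]$ and $w\in[0,v)$ let $$I(\theta,w)=\inf\Big\{\frac1q\int_0^\theta|\eta'(s)|^q ds:\ \eta\in W^{1,q}(0,\theta;\mathbb R),\ \eta(0)=v,\ \eta(\theta)=w,\ \eta\ge w \text{ on }[0,\theta],\ x+\int_0^\theta\eta(s)ds\le0\Big\}.$$ Fix $\theta\in\left(\frac{|x|}{v},\frac{2q-1}{q-1}\frac{|x|}{v}\right]$. Then the map $w\mapsto I(\theta,w)$ is decreasing on the interval $\left[0,\frac{(2q-1)|x|/\theta-(q-1)v}{q}\right]$ and increasing on the interval $\left[\frac{(2q-1)|x|/\theta-(q-1)v}{q},v\right)$. Its minimal value is $$\frac{(2q-1)^{q-1}}{q(q-1)^{q-1}}\frac{(v-|x|/\theta)^q}{\theta^{q-1}}.$$ *)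

theory Defs
  imports "HOL-Analysis.Analysis"
begin

text \<open>One-dimensional Sobolev space W^{1,q}(0,theta): eta (its continuous representative)
  is the primitive of an L^q function g on [0,theta]; g is the weak derivative of eta.\<close>
definition W1q_deriv :: "real \<Rightarrow> real \<Rightarrow> (real \<Rightarrow> real) \<Rightarrow> (real \<Rightarrow> real) \<Rightarrow> bool" where
  "W1q_deriv q \<theta> \<eta> g \<longleftrightarrow>
     g absolutely_integrable_on {0..\<theta>} \<and>
     (\<lambda>s. \<bar>g s\<bar> powr q) integrable_on {0..\<theta>} \<and>
     (\<forall>t\<in>{0..\<theta>}. \<eta> t = \<eta> 0 + integral {0..t} g)"

text \<open>The value function I(theta,w); the infimum is taken in the extended reals,
  so that it is +infinity when the admissible set is empty.\<close>
definition Ival :: "real \<Rightarrow> real \<Rightarrow> real \<Rightarrow> real \<Rightarrow> real \<Rightarrow> ereal" where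
  "Ival q x v \<theta> w = Inf {ereal ((1/q) * integral {0..\<theta>} (\<lambda>s. \<bar>g s\<bar> powr q)) | \<eta> g.
      W1q_deriv q \<theta> \<eta> g \<and> \<eta> 0 = v \<and> \<eta> \<theta> = w \<and>
      (\<forall>s\<in>{0..\<theta>}. \<eta> s \<ge> w) \<and> x + integral {0..\<theta>} \<eta> \<le> 0}"

end

theory Submission
  imports Defs
begin

(* Drop the endpoint condition: minimizing (1/q) \<integral>|\<eta>'|^q subject to \<eta>(0) = v and \<integral>\<eta> \<le> |x| is
   solved by \<eta>\<^sub>0(s) = m + D (1 - s/\<theta>)^(q/(q-1)), for which |\<eta>\<^sub>0'|^(q-1) is proportional to \<theta> - s.
   Optimality follows by testing Young's inequality against this weight, because
   \<integral> (\<theta> - s) \<eta>'(s) ds = \<integral>\<eta> - \<theta> v is controlled by the mass constraint.  For \<theta> in the given range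
   the endpoint m = \<eta>\<^sub>0(\<theta>) lies in [0, v) and \<eta>\<^sub>0 \<ge> m, so I(\<theta>, m) is the global minimum.
   Since the constraints and the energy are convex, averaging an admissible pair for the endpoint w
   with \<eta>\<^sub>0 gives an admissible pair for an endpoint between w and m with no larger energy:
   I decreases towards m from both sides. *)

lemma sigma_finite_lebesgue: "sigma_finite_measure (lebesgue :: real measure)"
proof -
  let ?A = "range (\<lambda>n::nat. {- real n..real n})"
  have "x \<in> \<Union>?A" for x :: real
  proof -
    obtain n :: nat where "\<bar>x\<bar> \<le> real n"
      using real_arch_simple by blast
    then show ?thesis
      by (intro UN_I[of n]) auto
  qed
  then have "\<Union>?A = UNIV"
    by blast
  then have "countable ?A \<and> ?A \<subseteq> sets lebesgue \<and> \<Union>?A = space lebesgue \<and>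
      (\<forall>a\<in>?A. emeasure lebesgue a \<noteq> \<infinity>)"
    by auto
  then show ?thesis
    unfolding sigma_finite_measure_def by blast
qed

lemma absolutely_integrable_diff_mult:
  fixes h :: "real \<Rightarrow> real"
  assumes "h absolutely_integrable_on {a..b}"
  shows "(\<lambda>s. (c - s) * h s) absolutely_integrable_on {a..b}"
proof (rule absolutely_integrable_bounded_measurable_product_real)
  have "continuous_on {a..b} (\<lambda>s. c - s)"
    by (intro continuous_intros)
  then show "(\<lambda>s. c - s) \<in> borel_measurable (lebesgue_on {a..b})"
    and "bounded ((\<lambda>s. c - s) ` {a..b})"
    by (auto intro: continuous_imp_measurable_on_sets_lebesgue compact_imp_bounded compact_continuous_image)
qed (use assms in auto)

lemma integrable_triangle_indicator:
  fixes h :: "real \<Rightarrow> real"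
  assumes h: "h absolutely_integrable_on {0..\<theta>}"
  shows "integrable (lebesgue \<Otimes>\<^sub>M lebesgue)
           (\<lambda>(s, t). indicator {s..\<theta>} t * (indicator {0..\<theta>} s * h s))"
proof -
  interpret pair_sigma_finite "lebesgue :: real measure" "lebesgue :: real measure"
    by (simp add: pair_sigma_finite_def sigma_finite_lebesgue)
  define H where "H s = indicator {0..\<theta>} s * h s" for s
  have "integrable lebesgue H"
    using h unfolding set_integrable_def H_def by simp
  then have H_meas: "H \<in> borel_measurable lebesgue"
    by auto
  have id_meas: "(\<lambda>x::real. x) \<in> borel_measurable lebesgue"
    by (rule measurable_completion) simp
  have "(\<lambda>(s, t). indicator {s..\<theta>} t * H s) = (\<lambda>p. (if fst p \<le> snd p \<and> snd p \<le> \<theta> then 1 else 0) * H (fst p))"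
    by (auto simp: fun_eq_iff indicator_def)
  also have "\<dots> \<in> borel_measurable (lebesgue \<Otimes>\<^sub>M lebesgue)"
    using measurable_compose[OF measurable_fst H_meas] measurable_compose[OF measurable_fst id_meas]
      measurable_compose[OF measurable_snd id_meas]
    by measurable
  finally have "integrable (lebesgue \<Otimes>\<^sub>M lebesgue) (\<lambda>(s, t). indicator {s..\<theta>} t * H s)"
  proof (rule Fubini_integrable)
    have "(\<lambda>s. \<bar>h s\<bar>) absolutely_integrable_on {0..\<theta>}"
      using absolutely_integrable_norm[OF h] by (simp add: o_def)
    moreover have "(\<integral>t. \<bar>indicator {s..\<theta>} t * H s\<bar> \<partial>lebesgue) = indicator {0..\<theta>} s * ((\<theta> - s) * \<bar>h s\<bar>)" for s
      by (simp add: abs_mult) (auto simp: H_def indicator_def)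
    ultimately show "integrable lebesgue (\<lambda>s. \<integral>t. norm (case_prod (\<lambda>s t. indicator {s..\<theta>} t * H s) (s, t)) \<partial>lebesgue)"
      using absolutely_integrable_diff_mult unfolding set_integrable_def by simp
    show "AE s in lebesgue. integrable lebesgue (\<lambda>t. case_prod (\<lambda>s t. indicator {s..\<theta>} t * H s) (s, t))"
      by (simp, intro AE_I2 disjI2 integrable_real_indicator) (auto simp: emeasure_lborel_Icc_eq)
  qed
  then show ?thesis
    unfolding H_def .
qed

lemma integral_indefinite_integral:
  fixes h :: "real \<Rightarrow> real"
  assumes h: "h absolutely_integrable_on {0..\<theta>}"
  shows "integral {0..\<theta>} (\<lambda>t. integral {0..t} h) = integral {0..\<theta>} (\<lambda>s. (\<theta> - s) * h s)"
proof -
  interpret pair_sigma_finite "lebesgue :: real measure" "lebesgue :: real measure"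
    by (simp add: pair_sigma_finite_def sigma_finite_lebesgue)
  \<comment> \<open>\<open>f s t = h s\<close> on the triangle \<open>0 \<le> s \<le> t \<le> \<theta>\<close>: integrating out \<open>s\<close> gives the left-hand side,
    integrating out \<open>t\<close> the right-hand side.\<close>
  define f where "f = (\<lambda>s t. indicator {s..\<theta>} t * (indicator {0..\<theta>} s * h s))"
  have inner_t: "(\<integral>t. f s t \<partial>lebesgue) = indicator {0..\<theta>} s * ((\<theta> - s) * h s)" for s
    by (simp add: f_def)
  have inner_s: "(\<integral>s. f s t \<partial>lebesgue) = indicator {0..\<theta>} t * integral {0..t} h" for t
  proof (cases "t \<in> {0..\<theta>}")
    case True
    then have "(\<lambda>s. f s t) = (\<lambda>s. indicator {0..t} s * h s)"
      by (auto simp: fun_eq_iff f_def indicator_def)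
    moreover have "h absolutely_integrable_on {0..t}"
      by (rule set_integrable_subset[OF h]) (use True in auto)
    ultimately show ?thesis
      using set_lebesgue_integral_eq_integral(2)[of "{0..t}" h] True
      by (simp add: set_lebesgue_integral_def)
  next
    case False
    then have "(\<lambda>s. f s t) = (\<lambda>s. 0)"
      by (auto simp: fun_eq_iff f_def indicator_def)
    then show ?thesis
      using False by simp
  qed
  have cont: "continuous_on {0..\<theta>} (\<lambda>t. integral {0..t} h)"
    by (rule indefinite_integral_continuous_1) (use h set_lebesgue_integral_eq_integral(1) in blast)
  have "integral {0..\<theta>} (\<lambda>t. integral {0..t} h) = (\<integral>t. (\<integral>s. f s t \<partial>lebesgue) \<partial>lebesgue)"
    using set_lebesgue_integral_eq_integral(2)[OF absolutely_integrable_continuous_real[OF cont]]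
    by (simp add: inner_s set_lebesgue_integral_def)
  also have "\<dots> = (\<integral>s. (\<integral>t. f s t \<partial>lebesgue) \<partial>lebesgue)"
    using integrable_triangle_indicator[OF h] unfolding f_def by (rule Fubini_integral)
  also have "\<dots> = integral {0..\<theta>} (\<lambda>s. (\<theta> - s) * h s)"
    using set_lebesgue_integral_eq_integral(2)[OF absolutely_integrable_diff_mult[OF h]]
    by (simp add: inner_t set_lebesgue_integral_def)
  finally show ?thesis .
qed

lemma abs_powr_convex_combination_le:
  fixes a b t q :: real
  assumes t: "0 \<le> t" "t \<le> 1" and q: "1 \<le> q"
  shows "\<bar>(1-t) * a + t * b\<bar> powr q \<le> (1-t) * \<bar>a\<bar> powr q + t * \<bar>b\<bar> powr q"
proof -
  have "\<bar>(1-t) * a + t * b\<bar> \<le> (1-t) * \<bar>a\<bar> + t * \<bar>b\<bar>"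
    using abs_triangle_ineq[of "(1-t) * a" "t * b"] t by (simp add: abs_mult)
  then have "\<bar>(1-t) * a + t * b\<bar> powr q \<le> ((1-t) * \<bar>a\<bar> + t * \<bar>b\<bar>) powr q"
    using q by (intro powr_mono2) auto
  also have "\<dots> \<le> (1-t) * \<bar>a\<bar> powr q + t * \<bar>b\<bar> powr q"
  proof (cases "a = 0 \<or> b = 0")
    case False
    then have "\<bar>a\<bar> \<in> {0<..}" "\<bar>b\<bar> \<in> {0<..}"
      by auto
    from convex_onD[OF powr_convex[OF q] t this] show ?thesis
      by simp
  next
    case True
    have "(u * c) powr q \<le> u * c powr q" if "0 \<le> u" "u \<le> 1" "0 \<le> c" for u c :: real
      using powr_mono'[OF q that(1,2)] that by (simp add: powr_mult mult_right_mono)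
    then show ?thesis
      using True t by auto
  qed
  finally show ?thesis .
qed

lemma Youngs_inequality_dual_power:
  fixes y z q :: real
  assumes q: "q > 1"
  shows "z * \<bar>y\<bar> powr (q-1) \<le> \<bar>z\<bar> powr q / q + (q-1)/q * \<bar>y\<bar> powr q"
proof -
  have "z * \<bar>y\<bar> powr (q-1) \<le> \<bar>z\<bar> * \<bar>y\<bar> powr (q-1)"
    by (simp add: mult_right_mono)
  also have "\<dots> \<le> \<bar>z\<bar> powr q / q + (\<bar>y\<bar> powr (q-1)) powr (q/(q-1)) / (q/(q-1))"
    using q by (intro Youngs_inequality) (auto simp: field_simps)
  also have "(\<bar>y\<bar> powr (q-1)) powr (q/(q-1)) = \<bar>y\<bar> powr q"
    using q by (simp add: powr_powr)
  finally show ?thesis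
    by (simp add: mult.commute)
qed

lemma W1q_deriv_integrable: "W1q_deriv q \<theta> \<eta> g \<Longrightarrow> g integrable_on {0..\<theta>}"
  unfolding W1q_deriv_def using set_lebesgue_integral_eq_integral(1) by blast

lemma W1q_deriv_continuous_on:
  assumes "W1q_deriv q \<theta> \<eta> g"
  shows "continuous_on {0..\<theta>} \<eta>"
proof (rule continuous_on_eq)
  show "continuous_on {0..\<theta>} (\<lambda>t. \<eta> 0 + integral {0..t} g)"
    by (intro continuous_intros indefinite_integral_continuous_1 W1q_deriv_integrable[OF assms])
  show "\<And>t. t \<in> {0..\<theta>} \<Longrightarrow> \<eta> 0 + integral {0..t} g = \<eta> t"
    using assms unfolding W1q_deriv_def by metis
qed

lemma W1q_deriv_integral:
  assumes W: "W1q_deriv q \<theta> \<eta> g" and "0 \<le> \<theta>"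
  shows "integral {0..\<theta>} \<eta> = \<theta> * \<eta> 0 + integral {0..\<theta>} (\<lambda>s. (\<theta> - s) * g s)"
proof -
  have "integral {0..\<theta>} \<eta> = integral {0..\<theta>} (\<lambda>t. \<eta> 0 + integral {0..t} g)"
    using W unfolding W1q_deriv_def by (intro integral_cong) blast
  also have "\<dots> = \<theta> * \<eta> 0 + integral {0..\<theta>} (\<lambda>t. integral {0..t} g)"
    using \<open>0 \<le> \<theta>\<close> by (subst integral_add)
      (auto intro: integrable_continuous_real indefinite_integral_continuous_1 W1q_deriv_integrable[OF W])
  also have "integral {0..\<theta>} (\<lambda>t. integral {0..t} g) = integral {0..\<theta>} (\<lambda>s. (\<theta> - s) * g s)"
    using W unfolding W1q_deriv_def by (intro integral_indefinite_integral) simp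
  finally show ?thesis .
qed

lemma W1q_deriv_convex_combination:
  assumes q: "1 \<le> q" and Wa: "W1q_deriv q \<theta> \<eta>a ga" and Wb: "W1q_deriv q \<theta> \<eta>b gb"
    and t: "0 \<le> t" "t \<le> 1"
  shows "W1q_deriv q \<theta> (\<lambda>s. (1-t) * \<eta>a s + t * \<eta>b s) (\<lambda>s. (1-t) * ga s + t * gb s)"
proof -
  define G where "G = (\<lambda>s. (1-t) * ga s + t * gb s)"
  have ga: "ga absolutely_integrable_on {0..\<theta>}" "(\<lambda>s. \<bar>ga s\<bar> powr q) integrable_on {0..\<theta>}"
    and gb: "gb absolutely_integrable_on {0..\<theta>}" "(\<lambda>s. \<bar>gb s\<bar> powr q) integrable_on {0..\<theta>}"
    using Wa Wb unfolding W1q_deriv_def by blast+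
  have G_abs: "G absolutely_integrable_on {0..\<theta>}"
    unfolding G_def by (intro set_integral_add(1) set_integrable_mult_right ga gb)
  have "(\<lambda>s. \<bar>G s\<bar> powr q) integrable_on {0..\<theta>}"
  proof (rule measurable_bounded_by_integrable_imp_integrable)
    show "(\<lambda>s. \<bar>G s\<bar> powr q) \<in> borel_measurable (lebesgue_on {0..\<theta>})"
      using integrable_imp_measurable[OF set_lebesgue_integral_eq_integral(1)[OF G_abs]]
      by measurable
    show "(\<lambda>s. (1-t) * \<bar>ga s\<bar> powr q + t * \<bar>gb s\<bar> powr q) integrable_on {0..\<theta>}"
      by (intro integrable_add integrable_on_mult_right ga gb)
    show "norm (\<bar>G s\<bar> powr q) \<le> (1-t) * \<bar>ga s\<bar> powr q + t * \<bar>gb s\<bar> powr q" for s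
      unfolding G_def using abs_powr_convex_combination_le[OF t q] by simp
  qed simp
  moreover have "(1-t) * \<eta>a s + t * \<eta>b s = ((1-t) * \<eta>a 0 + t * \<eta>b 0) + integral {0..s} G"
    if s: "s \<in> {0..\<theta>}" for s
  proof -
    have "{0..s} \<subseteq> {0..\<theta>}"
      using s by auto
    then have "ga integrable_on {0..s}" "gb integrable_on {0..s}"
      using integrable_on_subinterval W1q_deriv_integrable[OF Wa] W1q_deriv_integrable[OF Wb]
      by blast+
    then have "integral {0..s} G = (1-t) * integral {0..s} ga + t * integral {0..s} gb"
      unfolding G_def by (simp add: integral_add integrable_on_mult_right)
    moreover have "\<eta>a s = \<eta>a 0 + integral {0..s} ga" "\<eta>b s = \<eta>b 0 + integral {0..s} gb"
      using Wa Wb s unfolding W1q_deriv_def by blast+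
    ultimately show ?thesis
      by (simp add: algebra_simps)
  qed
  ultimately show ?thesis
    using G_abs unfolding W1q_deriv_def G_def by blast
qed

definition admissible ::
    "real \<Rightarrow> real \<Rightarrow> real \<Rightarrow> real \<Rightarrow> real \<Rightarrow> (real \<Rightarrow> real) \<Rightarrow> (real \<Rightarrow> real) \<Rightarrow> bool" where
  "admissible q x v \<theta> w \<eta> g \<longleftrightarrow> W1q_deriv q \<theta> \<eta> g \<and> \<eta> 0 = v \<and> \<eta> \<theta> = w \<and>
      (\<forall>s\<in>{0..\<theta>}. \<eta> s \<ge> w) \<and> x + integral {0..\<theta>} \<eta> \<le> 0"

definition energy :: "real \<Rightarrow> real \<Rightarrow> (real \<Rightarrow> real) \<Rightarrow> real" where
  "energy q \<theta> g = (1/q) * integral {0..\<theta>} (\<lambda>s. \<bar>g s\<bar> powr q)"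

lemma Ival_eq_Inf_energy:
  "Ival q x v \<theta> w = Inf {ereal (energy q \<theta> g) | \<eta> g. admissible q x v \<theta> w \<eta> g}"
  unfolding Ival_def admissible_def energy_def by simp

lemma energy_convex_combination_le:
  assumes q: "1 \<le> q" and Wa: "W1q_deriv q \<theta> \<eta>a ga" and Wb: "W1q_deriv q \<theta> \<eta>b gb"
    and t: "0 \<le> t" "t \<le> 1"
  shows "energy q \<theta> (\<lambda>s. (1-t) * ga s + t * gb s) \<le> (1-t) * energy q \<theta> ga + t * energy q \<theta> gb"
proof -
  have ga: "(\<lambda>s. \<bar>ga s\<bar> powr q) integrable_on {0..\<theta>}"
    and gb: "(\<lambda>s. \<bar>gb s\<bar> powr q) integrable_on {0..\<theta>}"
    and G: "(\<lambda>s. \<bar>(1-t) * ga s + t * gb s\<bar> powr q) integrable_on {0..\<theta>}"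
    using Wa Wb W1q_deriv_convex_combination[OF q Wa Wb t] unfolding W1q_deriv_def by blast+
  have "integral {0..\<theta>} (\<lambda>s. \<bar>(1-t) * ga s + t * gb s\<bar> powr q)
      \<le> integral {0..\<theta>} (\<lambda>s. (1-t) * \<bar>ga s\<bar> powr q + t * \<bar>gb s\<bar> powr q)"
    by (rule integral_le[OF G integrable_add[OF integrable_on_mult_right[OF ga] integrable_on_mult_right[OF gb]]])
      (rule abs_powr_convex_combination_le[OF t q])
  also have "\<dots> = (1-t) * integral {0..\<theta>} (\<lambda>s. \<bar>ga s\<bar> powr q) + t * integral {0..\<theta>} (\<lambda>s. \<bar>gb s\<bar> powr q)"
    using ga gb by (simp add: integral_add integrable_on_mult_right)
  finally have "(1/q) * integral {0..\<theta>} (\<lambda>s. \<bar>(1-t) * ga s + t * gb s\<bar> powr q)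
      \<le> (1/q) * ((1-t) * integral {0..\<theta>} (\<lambda>s. \<bar>ga s\<bar> powr q) + t * integral {0..\<theta>} (\<lambda>s. \<bar>gb s\<bar> powr q))"
    using q by (intro mult_left_mono) auto
  then show ?thesis
    unfolding energy_def by (simp add: algebra_simps add_divide_distrib diff_divide_distrib)
qed

lemma admissible_convex_combination:
  assumes q: "1 \<le> q" and A: "admissible q x v \<theta> wa \<eta>a ga" and B: "admissible q x v \<theta> wb \<eta>b gb"
    and t: "0 \<le> t" "t \<le> 1"
  shows "admissible q x v \<theta> ((1-t) * wa + t * wb)
           (\<lambda>s. (1-t) * \<eta>a s + t * \<eta>b s) (\<lambda>s. (1-t) * ga s + t * gb s)"
proof -
  have Wa: "W1q_deriv q \<theta> \<eta>a ga" and Wb: "W1q_deriv q \<theta> \<eta>b gb"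
    using A B unfolding admissible_def by auto
  have "integral {0..\<theta>} (\<lambda>s. (1-t) * \<eta>a s + t * \<eta>b s)
      = (1-t) * integral {0..\<theta>} \<eta>a + t * integral {0..\<theta>} \<eta>b"
    using integrable_continuous_real[OF W1q_deriv_continuous_on[OF Wa]]
      integrable_continuous_real[OF W1q_deriv_continuous_on[OF Wb]]
    by (simp add: integral_add integrable_on_mult_right)
  then have "x + integral {0..\<theta>} (\<lambda>s. (1-t) * \<eta>a s + t * \<eta>b s)
      = (1-t) * (x + integral {0..\<theta>} \<eta>a) + t * (x + integral {0..\<theta>} \<eta>b)"
    by (simp add: algebra_simps)
  also have "\<dots> \<le> 0"
    using A B t unfolding admissible_def by (simp add: add_nonpos_nonpos mult_nonneg_nonpos)
  finally have "x + integral {0..\<theta>} (\<lambda>s. (1-t) * \<eta>a s + t * \<eta>b s) \<le> 0" .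
  moreover have "(1-t) * wa + t * wb \<le> (1-t) * \<eta>a s + t * \<eta>b s" if "s \<in> {0..\<theta>}" for s
    using A B t that unfolding admissible_def by (intro add_mono mult_left_mono) auto
  ultimately show ?thesis
    using A B W1q_deriv_convex_combination[OF q Wa Wb t] unfolding admissible_def
    by (simp add: algebra_simps)
qed

lemma energy_le_Ival:
  assumes "\<And>\<eta> g. admissible q x v \<theta> w \<eta> g \<Longrightarrow> E \<le> energy q \<theta> g"
  shows "ereal E \<le> Ival q x v \<theta> w"
  unfolding Ival_eq_Inf_energy using assms by (auto intro!: Inf_greatest)

lemma Ival_eq_energy_of_minimizer:
  assumes opt: "admissible q x v \<theta> m \<eta>\<^sub>0 g\<^sub>0"
    and min: "\<And>w \<eta> g. admissible q x v \<theta> w \<eta> g \<Longrightarrow> energy q \<theta> g\<^sub>0 \<le> energy q \<theta> g"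
  shows "Ival q x v \<theta> m = ereal (energy q \<theta> g\<^sub>0)"
proof (rule antisym)
  show "Ival q x v \<theta> m \<le> ereal (energy q \<theta> g\<^sub>0)"
    unfolding Ival_eq_Inf_energy using opt by (blast intro: Inf_lower)
qed (rule energy_le_Ival[OF min])

lemma Ival_le_on_segment_to_minimizer:
  assumes q: "1 \<le> q"
    and opt: "admissible q x v \<theta> m \<eta>\<^sub>0 g\<^sub>0"
    and min: "\<And>w \<eta> g. admissible q x v \<theta> w \<eta> g \<Longrightarrow> energy q \<theta> g\<^sub>0 \<le> energy q \<theta> g"
    and w: "w \<in> closed_segment w' m"
  shows "Ival q x v \<theta> w \<le> Ival q x v \<theta> w'"
proof -
  obtain t where t: "0 \<le> t" "t \<le> 1" and w_eq: "w = (1-t) * w' + t * m"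
    using w by (auto simp: closed_segment_def)
  have "Ival q x v \<theta> w \<le> ereal (energy q \<theta> g)" if A: "admissible q x v \<theta> w' \<eta> g" for \<eta> g
  proof -
    let ?g = "\<lambda>s. (1-t) * g s + t * g\<^sub>0 s"
    have "admissible q x v \<theta> w (\<lambda>s. (1-t) * \<eta> s + t * \<eta>\<^sub>0 s) ?g"
      unfolding w_eq by (rule admissible_convex_combination[OF q A opt t])
    then have "Ival q x v \<theta> w \<le> ereal (energy q \<theta> ?g)"
      unfolding Ival_eq_Inf_energy by (blast intro: Inf_lower)
    also have "energy q \<theta> ?g \<le> (1-t) * energy q \<theta> g + t * energy q \<theta> g\<^sub>0"
      using A opt unfolding admissible_def by (blast intro: energy_convex_combination_le[OF q _ _ t])
    also have "\<dots> \<le> energy q \<theta> g"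
      using mult_left_mono[OF min[OF A] t(1)] by (simp add: algebra_simps)
    finally show ?thesis
      by simp
  qed
  then show ?thesis
    unfolding Ival_eq_Inf_energy[of q x v \<theta> w'] by (blast intro: Inf_greatest)
qed

lemma has_real_derivative_one_minus_div_powr:
  fixes \<theta> r s :: real
  assumes "\<theta> > 0" "s < \<theta>"
  shows "((\<lambda>s. (1 - s/\<theta>) powr r) has_real_derivative - r/\<theta> * (1 - s/\<theta>) powr (r - 1)) (at s)"
  using assms by (auto intro!: derivative_eq_intros simp: field_simps)

lemma continuous_on_one_minus_div_powr:
  fixes \<theta> r :: real
  assumes "\<theta> > 0" "r > 0"
  shows "continuous_on {0..\<theta>} (\<lambda>s. (1 - s/\<theta>) powr r)"
  using assms by (intro continuous_on_powr' continuous_intros) (auto simp: field_simps)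

lemma has_integral_one_minus_div_powr:
  fixes \<theta> r t :: real
  assumes \<theta>: "\<theta> > 0" and r: "r > 0" and t: "t \<in> {0..\<theta>}"
  shows "((\<lambda>s. (1 - s/\<theta>) powr r) has_integral \<theta>/(r+1) * (1 - (1 - t/\<theta>) powr (r+1))) {0..t}"
proof -
  define F where "F s = - \<theta>/(r+1) * (1 - s/\<theta>) powr (r+1)" for s
  have "((\<lambda>s. (1 - s/\<theta>) powr r) has_integral F t - F 0) {0..t}"
  proof (rule fundamental_theorem_of_calculus_interior)
    have "continuous_on {0..t} (\<lambda>s. (1 - s/\<theta>) powr (r+1))"
      using r t by (intro continuous_on_subset[OF continuous_on_one_minus_div_powr[OF \<theta>]]) auto
    then show "continuous_on {0..t} F"
      unfolding F_def by (rule continuous_on_mult_left)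
    show "(F has_vector_derivative (1 - s/\<theta>) powr r) (at s)" if "s \<in> {0<..<t}" for s
    proof -
      have "(F has_real_derivative - \<theta>/(r+1) * (- (r+1)/\<theta> * (1 - s/\<theta>) powr (r + 1 - 1))) (at s)"
        unfolding F_def using that t
        by (intro DERIV_cmult has_real_derivative_one_minus_div_powr[OF \<theta>]) auto
      moreover have "- \<theta>/(r+1) * (- (r+1)/\<theta> * X) = X" for X :: real
        using \<theta> r by (simp add: divide_simps) (simp add: algebra_simps)
      ultimately show ?thesis
        by (simp add: has_real_derivative_iff_has_vector_derivative[symmetric])
    qed
  qed (use t in simp)
  moreover have "F t - F 0 = \<theta>/(r+1) * (1 - (1 - t/\<theta>) powr (r+1))"
    unfolding F_def by (simp add: algebra_simps)
  ultimately show ?thesis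
    by simp
qed

lemma has_integral_one_minus_div_powr_conjugate:
  fixes \<theta> q :: real
  assumes "q > 1" and "\<theta> > 0"
  shows "((\<lambda>s. (1 - s/\<theta>) powr (q/(q-1))) has_integral \<theta> * (q-1) / (2*q-1)) {0..\<theta>}"
  using has_integral_one_minus_div_powr[of \<theta> "q/(q-1)" \<theta>] assms by (simp add: field_simps)

text \<open>Euler--Lagrange equation for the mass constraint with free endpoint: \<open>|\<eta>'|^(q-1)\<close> is affine
  in \<open>s\<close> and vanishes at \<open>\<theta>\<close>.\<close>

definition optimal_profile :: "real \<Rightarrow> real \<Rightarrow> real \<Rightarrow> real \<Rightarrow> real \<Rightarrow> real" where
  "optimal_profile q \<theta> m D s = m + D * (1 - s/\<theta>) powr (q/(q-1))"

definition optimal_slope :: "real \<Rightarrow> real \<Rightarrow> real \<Rightarrow> real \<Rightarrow> real" where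
  "optimal_slope q \<theta> D s = - (D*q/((q-1)*\<theta>)) * (1 - s/\<theta>) powr (1/(q-1))"

lemma optimal_profile_W1q_deriv:
  assumes q: "q > 1" and \<theta>: "\<theta> > 0"
  shows "W1q_deriv q \<theta> (optimal_profile q \<theta> m D) (optimal_slope q \<theta> D)"
proof -
  have cont: "continuous_on {0..\<theta>} (optimal_slope q \<theta> D)"
    unfolding optimal_slope_def using q
    by (intro continuous_on_mult_left continuous_on_one_minus_div_powr[OF \<theta>]) simp
  have "integral {0..t} (optimal_slope q \<theta> D) = D * (1 - t/\<theta>) powr (q/(q-1)) - D"
    if "t \<in> {0..\<theta>}" for t
  proof -
    have "1/(q-1) + 1 = q/(q-1)"
      using q by (simp add: field_simps)
    then have "((\<lambda>s. (1 - s/\<theta>) powr (1/(q-1))) has_integral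
        \<theta>/(q/(q-1)) * (1 - (1 - t/\<theta>) powr (q/(q-1)))) {0..t}"
      using has_integral_one_minus_div_powr[OF \<theta> _ that, of "1/(q-1)"] q by simp
    from has_integral_mult_right[OF this, of "- (D*q/((q-1)*\<theta>))"]
    have "integral {0..t} (optimal_slope q \<theta> D)
        = - (D*q/((q-1)*\<theta>)) * (\<theta>/(q/(q-1)) * (1 - (1 - t/\<theta>) powr (q/(q-1))))"
      unfolding optimal_slope_def by (rule integral_unique)
    also have "\<dots> = D * (1 - t/\<theta>) powr (q/(q-1)) - D"
      using q \<theta> by (simp add: field_simps)
    finally show ?thesis .
  qed
  moreover have "continuous_on {0..\<theta>} (\<lambda>s. \<bar>optimal_slope q \<theta> D s\<bar> powr q)"
    using cont q by (intro continuous_on_powr' continuous_intros) auto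
  ultimately show ?thesis
    unfolding W1q_deriv_def optimal_profile_def
    using absolutely_integrable_continuous_real[OF cont] integrable_continuous_real
    by simp
qed

lemma integral_optimal_profile:
  assumes q: "q > 1" and \<theta>: "\<theta> > 0"
  shows "integral {0..\<theta>} (optimal_profile q \<theta> m D) = m * \<theta> + D * \<theta> * (q-1) / (2*q-1)"
proof -
  have "(optimal_profile q \<theta> m D has_integral m * \<theta> + D * (\<theta> * (q-1) / (2*q-1))) {0..\<theta>}"
    unfolding optimal_profile_def using \<theta>
    using has_integral_const_real[of m 0 \<theta>] has_integral_one_minus_div_powr_conjugate[OF q \<theta>]
    by (intro has_integral_add has_integral_mult_right) (auto simp: mult.commute)
  then show ?thesis
    by (simp add: integral_unique)
qed

lemma energy_optimal_slope:
  assumes q: "q > 1" and \<theta>: "\<theta> > 0" and D: "D \<ge> 0"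
  shows "energy q \<theta> (optimal_slope q \<theta> D) = (D*q/((q-1)*\<theta>)) powr q * \<theta> * (q-1) / (q*(2*q-1))"
proof -
  define c where "c = D*q/((q-1)*\<theta>)"
  have c: "c \<ge> 0"
    unfolding c_def using q \<theta> D by simp
  have "\<bar>optimal_slope q \<theta> D s\<bar> powr q = c powr q * (1 - s/\<theta>) powr (q/(q-1))"
    if "s \<in> {0..\<theta>}" for s
  proof -
    have "1 - s/\<theta> \<ge> 0"
      using that \<theta> by (simp add: field_simps)
    then show ?thesis
      unfolding optimal_slope_def c_def[symmetric] using c by (simp add: abs_mult powr_mult powr_powr)
  qed
  then have "integral {0..\<theta>} (\<lambda>s. \<bar>optimal_slope q \<theta> D s\<bar> powr q)
      = integral {0..\<theta>} (\<lambda>s. c powr q * (1 - s/\<theta>) powr (q/(q-1)))"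
    by (rule integral_cong)
  also have "\<dots> = c powr q * (\<theta> * (q-1) / (2*q-1))"
    by (rule integral_unique[OF has_integral_mult_right[OF has_integral_one_minus_div_powr_conjugate[OF q \<theta>]]])
  finally show ?thesis
    unfolding energy_def c_def by simp
qed

lemma optimal_slope_nonpos:
  assumes "q > 1" and "\<theta> > 0" and "D \<ge> 0"
  shows "optimal_slope q \<theta> D s \<le> 0"
  unfolding optimal_slope_def using assms by simp

lemma abs_optimal_slope_powr:
  assumes q: "q > 1" and \<theta>: "\<theta> > 0" and D: "D \<ge> 0" and s: "s \<in> {0..\<theta>}"
  shows "\<bar>optimal_slope q \<theta> D s\<bar> powr (q-1) = (D*q/((q-1)*\<theta>)) powr (q-1) / \<theta> * (\<theta> - s)"
proof -
  define c where "c = D*q/((q-1)*\<theta>)"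
  have "1 - s/\<theta> \<ge> 0"
    using s \<theta> by (simp add: field_simps)
  moreover have "c \<ge> 0"
    unfolding c_def using q \<theta> D by simp
  ultimately have "\<bar>optimal_slope q \<theta> D s\<bar> powr (q-1) = c powr (q-1) * (1 - s/\<theta>)"
    unfolding optimal_slope_def c_def[symmetric] using q by (simp add: abs_mult powr_mult powr_powr)
  then show ?thesis
    unfolding c_def using \<theta> by (simp add: field_simps)
qed

lemma energy_optimal_slope_le:
  assumes q: "q > 1" and \<theta>: "\<theta> > 0" and D: "D \<ge> 0"
    and g: "g absolutely_integrable_on {0..\<theta>}" "(\<lambda>s. \<bar>g s\<bar> powr q) integrable_on {0..\<theta>}"
    and moment: "integral {0..\<theta>} (\<lambda>s. (\<theta> - s) * g s)
                   \<le> integral {0..\<theta>} (\<lambda>s. (\<theta> - s) * optimal_slope q \<theta> D s)"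
  shows "energy q \<theta> (optimal_slope q \<theta> D) \<le> energy q \<theta> g"
proof -
  define g\<^sub>0 where "g\<^sub>0 = optimal_slope q \<theta> D"
  define K where "K = (D*q/((q-1)*\<theta>)) powr (q-1) / \<theta>"
  have K: "K \<ge> 0"
    unfolding K_def using \<theta> by simp
  have g\<^sub>0: "g\<^sub>0 absolutely_integrable_on {0..\<theta>}" "(\<lambda>s. \<bar>g\<^sub>0 s\<bar> powr q) integrable_on {0..\<theta>}"
    using optimal_profile_W1q_deriv[OF q \<theta>] unfolding W1q_deriv_def g\<^sub>0_def by blast+
  \<comment> \<open>Young's inequality tested against \<open>|g\<^sub>0|^(q-1) = K (\<theta> - s)\<close> is an equality at \<open>g\<^sub>0\<close>,
    and the weight \<open>\<theta> - s\<close> turns the pairing into the moment bounded by hypothesis.\<close>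
  have young: "- K * ((\<theta> - s) * g s) \<le> \<bar>g s\<bar> powr q / q + (q-1)/q * \<bar>g\<^sub>0 s\<bar> powr q"
    and equality: "- K * ((\<theta> - s) * g\<^sub>0 s) = \<bar>g\<^sub>0 s\<bar> powr q" if s: "s \<in> {0..\<theta>}" for s
  proof -
    have dual: "\<bar>g\<^sub>0 s\<bar> powr (q-1) = K * (\<theta> - s)"
      unfolding g\<^sub>0_def K_def by (rule abs_optimal_slope_powr[OF q \<theta> D s])
    show "- K * ((\<theta> - s) * g s) \<le> \<bar>g s\<bar> powr q / q + (q-1)/q * \<bar>g\<^sub>0 s\<bar> powr q"
      using Youngs_inequality_dual_power[OF q, of "- g s" "g\<^sub>0 s"] by (simp add: dual mult_ac)
    have "- K * ((\<theta> - s) * g\<^sub>0 s) = \<bar>g\<^sub>0 s\<bar> * \<bar>g\<^sub>0 s\<bar> powr (q-1)"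
      using dual optimal_slope_nonpos[OF q \<theta> D, of s] unfolding g\<^sub>0_def by (simp add: abs_if)
    then show "- K * ((\<theta> - s) * g\<^sub>0 s) = \<bar>g\<^sub>0 s\<bar> powr q"
      by (simp add: powr_mult_base)
  qed
  have "integral {0..\<theta>} (\<lambda>s. \<bar>g\<^sub>0 s\<bar> powr q) = integral {0..\<theta>} (\<lambda>s. - K * ((\<theta> - s) * g\<^sub>0 s))"
    using equality by (intro integral_cong) simp
  also have "\<dots> = - K * integral {0..\<theta>} (\<lambda>s. (\<theta> - s) * g\<^sub>0 s)"
    by simp
  also have "\<dots> \<le> - K * integral {0..\<theta>} (\<lambda>s. (\<theta> - s) * g s)"
    using moment K unfolding g\<^sub>0_def by (simp add: mult_left_mono)
  also have "\<dots> = integral {0..\<theta>} (\<lambda>s. - K * ((\<theta> - s) * g s))"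
    by simp
  also have "\<dots> \<le> integral {0..\<theta>} (\<lambda>s. \<bar>g s\<bar> powr q / q + (q-1)/q * \<bar>g\<^sub>0 s\<bar> powr q)"
  proof (rule integral_le)
    from absolutely_integrable_diff_mult[OF g(1)]
    show "(\<lambda>s. - K * ((\<theta> - s) * g s)) integrable_on {0..\<theta>}"
      by (intro integrable_on_mult_right set_lebesgue_integral_eq_integral(1))
    show "(\<lambda>s. \<bar>g s\<bar> powr q / q + (q-1)/q * \<bar>g\<^sub>0 s\<bar> powr q) integrable_on {0..\<theta>}"
      using g(2) g\<^sub>0(2) by (intro integrable_add integrable_on_divide integrable_on_mult_right)
  qed (rule young)
  also have "\<dots> = integral {0..\<theta>} (\<lambda>s. \<bar>g s\<bar> powr q) / q
                  + (q-1)/q * integral {0..\<theta>} (\<lambda>s. \<bar>g\<^sub>0 s\<bar> powr q)"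
    using g(2) g\<^sub>0(2) by (subst integral_add) (auto intro!: integrable_on_divide integrable_on_mult_right)
  finally show ?thesis
    unfolding energy_def g\<^sub>0_def[symmetric] using q by (simp add: field_simps)
qed

lemma admissible_optimal_profile:
  assumes q: "q > 1" and \<theta>: "\<theta> > 0" and D: "D \<ge> 0" and v: "m + D = v"
    and mass: "x + (m * \<theta> + D * \<theta> * (q-1) / (2*q-1)) = 0"
  shows "admissible q x v \<theta> m (optimal_profile q \<theta> m D) (optimal_slope q \<theta> D)"
  unfolding admissible_def
  using optimal_profile_W1q_deriv[OF q \<theta>] integral_optimal_profile[OF q \<theta>] mass v D \<theta>
  by (auto simp: optimal_profile_def)

lemma energy_optimal_slope_le_admissible:
  assumes q: "q > 1" and \<theta>: "\<theta> > 0" and D: "D \<ge> 0" and v: "m + D = v"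
    and mass: "x + (m * \<theta> + D * \<theta> * (q-1) / (2*q-1)) = 0"
    and adm: "admissible q x v \<theta> w \<eta> g"
  shows "energy q \<theta> (optimal_slope q \<theta> D) \<le> energy q \<theta> g"
proof (rule energy_optimal_slope_le[OF q \<theta> D])
  have W: "W1q_deriv q \<theta> \<eta> g"
    using adm unfolding admissible_def by blast
  then show "g absolutely_integrable_on {0..\<theta>}" "(\<lambda>s. \<bar>g s\<bar> powr q) integrable_on {0..\<theta>}"
    unfolding W1q_deriv_def by blast+
  have "\<theta> * v + integral {0..\<theta>} (\<lambda>s. (\<theta> - s) * g s) = integral {0..\<theta>} \<eta>"
    using W1q_deriv_integral[OF W] adm \<theta> unfolding admissible_def by simp
  also have "\<dots> \<le> integral {0..\<theta>} (optimal_profile q \<theta> m D)"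
    using adm mass integral_optimal_profile[OF q \<theta>] unfolding admissible_def by simp
  also have "\<dots> = \<theta> * v + integral {0..\<theta>} (\<lambda>s. (\<theta> - s) * optimal_slope q \<theta> D s)"
    using W1q_deriv_integral[OF optimal_profile_W1q_deriv[OF q \<theta>]] \<theta> v
    by (simp add: optimal_profile_def)
  finally show "integral {0..\<theta>} (\<lambda>s. (\<theta> - s) * g s)
      \<le> integral {0..\<theta>} (\<lambda>s. (\<theta> - s) * optimal_slope q \<theta> D s)"
    by simp
qed

lemma energy_optimal_slope_closed_form:
  assumes q: "q > 1" and \<theta>: "\<theta> > 0" and P: "P \<ge> 0"
  shows "energy q \<theta> (optimal_slope q \<theta> ((2*q-1)/q * P))
    = (2*q-1) powr (q-1) / (q * (q-1) powr (q-1)) * (P powr q / \<theta> powr (q-1))"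
proof -
  have rescale: "(a * P / (b * \<theta>)) powr q * \<theta> * b / (q * a)
      = a powr (q-1) / (q * b powr (q-1)) * (P powr q / \<theta> powr (q-1))"
    if "a > 0" "b > 0" for a b :: real
  proof -
    have split: "c powr q = c * c powr (q-1)" if "c > 0" for c :: real
      using powr_mult_base[of c "q-1"] that by simp
    have "(a * P / (b * \<theta>)) powr q = a * a powr (q-1) * P powr q / (b * b powr (q-1) * (\<theta> * \<theta> powr (q-1)))"
      using that \<theta> by (simp add: powr_divide powr_mult split)
    then show ?thesis
      using that \<theta> q by (simp add: field_simps)
  qed
  have "(2*q-1)/q * P \<ge> 0"
    using q P by simp
  then have "energy q \<theta> (optimal_slope q \<theta> ((2*q-1)/q * P))
      = ((2*q-1)/q * P * q / ((q-1) * \<theta>)) powr q * \<theta> * (q-1) / (q * (2*q-1))"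
    by (rule energy_optimal_slope[OF q \<theta>])
  also have "(2*q-1)/q * P * q = (2*q-1) * P"
    using q by simp
  finally show ?thesis
    using rescale[of "2*q-1" "q-1"] q by simp
qed

lemma Ival_minimum_at_profile_endpoint:
  assumes q: "q > 1" and \<theta>: "\<theta> > 0" and D: "D > 0" and m: "0 \<le> m" and v: "m + D = v"
    and mass: "x + (m * \<theta> + D * \<theta> * (q-1) / (2*q-1)) = 0"
  shows "\<lbrakk>w \<le> w'; w' \<le> m\<rbrakk> \<Longrightarrow> Ival q x v \<theta> w' \<le> Ival q x v \<theta> w"
    and "\<lbrakk>m \<le> w; w \<le> w'\<rbrakk> \<Longrightarrow> Ival q x v \<theta> w \<le> Ival q x v \<theta> w'"
    and "Ival q x v \<theta> m = ereal (energy q \<theta> (optimal_slope q \<theta> D))"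
    and "(INF w\<in>{0..<v}. Ival q x v \<theta> w) = ereal (energy q \<theta> (optimal_slope q \<theta> D))"
proof -
  note opt = admissible_optimal_profile[OF q \<theta> less_imp_le[OF D] v mass]
  note min = energy_optimal_slope_le_admissible[OF q \<theta> less_imp_le[OF D] v mass]
  note segment = Ival_le_on_segment_to_minimizer[OF _ opt min]
  show "\<lbrakk>w \<le> w'; w' \<le> m\<rbrakk> \<Longrightarrow> Ival q x v \<theta> w' \<le> Ival q x v \<theta> w"
    and "\<lbrakk>m \<le> w; w \<le> w'\<rbrakk> \<Longrightarrow> Ival q x v \<theta> w \<le> Ival q x v \<theta> w'"
    using q by (auto intro!: segment simp: closed_segment_eq_real_ivl)
  show Ival_m: "Ival q x v \<theta> m = ereal (energy q \<theta> (optimal_slope q \<theta> D))"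
    by (rule Ival_eq_energy_of_minimizer[OF opt min])
  show "(INF w\<in>{0..<v}. Ival q x v \<theta> w) = ereal (energy q \<theta> (optimal_slope q \<theta> D))"
  proof (rule antisym)
    show "(INF w\<in>{0..<v}. Ival q x v \<theta> w) \<le> ereal (energy q \<theta> (optimal_slope q \<theta> D))"
      using m D v Ival_m by (intro INF_lower2[of m]) auto
  qed (intro INF_greatest energy_le_Ival min)
qed

theorem lemma2p3:
  fixes q T x v \<theta> :: real
  assumes "q > 1" and "T > 0" and "x < 0" and "v > 0"
    and "(2*q - 1) / (q - 1) * (\<bar>x\<bar> / v) < T"
    and "\<theta> \<in> {\<bar>x\<bar> / v <.. (2*q - 1) / (q - 1) * (\<bar>x\<bar> / v)}"
  shows "(\<forall>w1 w2. 0 \<le> w1 \<and> w1 \<le> w2 \<and> w2 \<le> ((2*q - 1) * \<bar>x\<bar> / \<theta> - (q - 1) * v) / q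
            \<longrightarrow> Ival q x v \<theta> w2 \<le> Ival q x v \<theta> w1)
       \<and> (\<forall>w1 w2. ((2*q - 1) * \<bar>x\<bar> / \<theta> - (q - 1) * v) / q \<le> w1 \<and> w1 \<le> w2 \<and> w2 < v
            \<longrightarrow> Ival q x v \<theta> w1 \<le> Ival q x v \<theta> w2)
       \<and> (INF w\<in>{0..<v}. Ival q x v \<theta> w) =
           ereal ((2*q - 1) powr (q - 1) / (q * (q - 1) powr (q - 1))
                  * ((v - \<bar>x\<bar> / \<theta>) powr q / \<theta> powr (q - 1)))
       \<and> Ival q x v \<theta> (((2*q - 1) * \<bar>x\<bar> / \<theta> - (q - 1) * v) / q) =
           ereal ((2*q - 1) powr (q - 1) / (q * (q - 1) powr (q - 1))
                  * ((v - \<bar>x\<bar> / \<theta>) powr q / \<theta> powr (q - 1)))"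
proof -
  define m where "m = ((2*q - 1) * \<bar>x\<bar> / \<theta> - (q - 1) * v) / q"
  define D where "D = (2*q - 1) / q * (v - \<bar>x\<bar> / \<theta>)"
  have q: "q > 1" and v: "v > 0"
    using assms by simp_all
  have "0 < \<bar>x\<bar> / v"
    using \<open>x < 0\<close> v by (simp add: divide_neg_pos)
  then have \<theta>: "\<theta> > 0"
    using assms(6) by simp
  have "\<bar>x\<bar> < v * \<theta>" and "(q - 1) * v * \<theta> \<le> (2*q - 1) * \<bar>x\<bar>"
    using assms(6) q v by (simp_all add: field_simps)
  then have P: "v - \<bar>x\<bar> / \<theta> > 0" and m: "0 \<le> m"
    unfolding m_def using q \<theta> by (simp_all add: field_simps)
  have D: "D > 0"
    unfolding D_def using q P by simp
  have v_eq: "m + D = v" and mass: "x + (m * \<theta> + D * \<theta> * (q-1) / (2*q-1)) = 0"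
    unfolding m_def D_def using q \<theta> \<open>x < 0\<close> by (simp_all add: field_simps)
  have energy: "energy q \<theta> (optimal_slope q \<theta> D) = (2*q - 1) powr (q - 1) / (q * (q - 1) powr (q - 1))
      * ((v - \<bar>x\<bar> / \<theta>) powr q / \<theta> powr (q - 1))"
    unfolding D_def using q \<theta> P by (intro energy_optimal_slope_closed_form) simp_all
  note Ival = Ival_minimum_at_profile_endpoint[OF q \<theta> D m v_eq mass]
  show ?thesis
    unfolding m_def[symmetric] energy[symmetric] Ival(3,4)
    using Ival(1,2) by blast
qed

end
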